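(* Let $I\subseteq\mathbb{R}$ be an open interval and let $f$ be a non-constant real analytic function on $I$ with $f(\mathbb{Q}\cap I)\subseteq\mathbb{Q}$. Assume there exists $\eta\in\mathbb{R}$ such that whenever $p/q\in I$ with $\gcd(p,q)=1$, $q\geq 2$, and $f(p/q)=p'/q'$ with $\gcd(p',q')=1$, one has $q'\leq q^{\eta}$. Then $f(\mathscr{L}\cap I)\subseteq\mathscr{L}$.
   Context: $\mathscr{L}$ denotes the set of Liouville numbers: real irrational numbers $\zeta$ such that for every $\eta>0$ the inequality $|\zeta-y/x|\leq x^{-\eta}$ has infinitely many rational solutions $y/x$ with $x\geq 1$. Fractions are written with positive denominators. *)

theory Defs
  imports "HOL-Analysis.Analysis"
begin

definition liouville_set :: "real set" where
  "liouville_set = {z. z \<notin> \<rat> \<and>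
     (\<forall>\<eta>>0. infinite {(y::int, x::int). x \<ge> 1 \<and>
          \<bar>z - real_of_int y / real_of_int x\<bar> \<le> real_of_int x powr (- \<eta>)})}"

definition open_interval :: "real set \<Rightarrow> bool" where
  "open_interval I \<longleftrightarrow> is_interval I \<and> open I \<and> I \<noteq> {}"

definition real_analytic_on :: "(real \<Rightarrow> real) \<Rightarrow> real set \<Rightarrow> bool" where
  "real_analytic_on f I \<longleftrightarrow>
     (\<forall>x0\<in>I. \<exists>r>0. \<exists>a :: nat \<Rightarrow> real.
        \<forall>x. \<bar>x - x0\<bar> < r \<longrightarrow> x \<in> I \<and> (\<lambda>n. a n * (x - x0) ^ n) sums f x)"

end

theory Submission
  imports Defs "HOL-Complex_Analysis.Cauchy_Integral_Formula"
begin

text \<open>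
  Fix a Liouville number \<open>\<zeta> \<in> I\<close>. Since \<open>f\<close> is analytic and not constant on the connected
  set \<open>I\<close>, near \<open>\<zeta>\<close> it satisfies \<open>0 < \<bar>f x - f \<zeta>\<bar> \<le> C \<bar>x - \<zeta>\<bar>\<close> for \<open>x \<noteq> \<zeta>\<close>. A reduced
  fraction \<open>p/q\<close> with \<open>\<bar>\<zeta> - p/q\<bar> \<le> q powr -(\<eta>M + 1)\<close> and \<open>q > C\<close> is mapped to a fraction
  \<open>p'/q' \<noteq> f \<zeta>\<close> with \<open>q' \<le> q powr \<eta>\<close>, hence
  \<open>\<bar>f \<zeta> - p'/q'\<bar> \<le> C q powr -(\<eta>M + 1) < q powr -(\<eta>M) \<le> q' powr -M\<close>.
  Such arbitrarily close approximations of every order \<open>M\<close> make \<open>f \<zeta>\<close> a Liouville number.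
\<close>

lemma DERIV_imp_eventually_difference_bound:
  fixes f :: "real \<Rightarrow> real"
  assumes "DERIV f x :> D"
  shows "\<forall>\<^sub>F y in nhds x. \<bar>f y - f x\<bar> \<le> (\<bar>D\<bar> + 1) * \<bar>y - x\<bar>"
proof -
  have "((\<lambda>y. (f y - f x) / (y - x)) \<longlongrightarrow> D) (at x)"
    using assms has_field_derivative_iff by blast
  then have "\<forall>\<^sub>F y in at x. dist ((f y - f x) / (y - x)) D < 1"
    by (rule tendstoD) simp
  then have "\<forall>\<^sub>F y in at x. \<bar>f y - f x\<bar> \<le> (\<bar>D\<bar> + 1) * \<bar>y - x\<bar>"
  proof eventually_elim
    case (elim y)
    then have "\<bar>(f y - f x) / (y - x)\<bar> \<le> \<bar>D\<bar> + 1"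
      using abs_triangle_ineq2[of "(f y - f x) / (y - x)" D] by (simp add: dist_real_def)
    then have "\<bar>f y - f x\<bar> / \<bar>y - x\<bar> \<le> \<bar>D\<bar> + 1"
      by (simp add: abs_divide)
    then show ?case
      by (cases "y = x") (simp_all add: divide_le_eq)
  qed
  then show ?thesis
    by (simp add: eventually_nhds_conv_at)
qed

lemma real_analytic_on_imp_DERIV:
  assumes "real_analytic_on f I" "x \<in> I"
  obtains D where "DERIV f x :> D"
proof -
  obtain r a where r: "r > 0"
    and sums: "\<And>y. \<bar>y - x\<bar> < r \<Longrightarrow> y \<in> I \<and> (\<lambda>n. a n * (y - x) ^ n) sums f y"
    using assms unfolding real_analytic_on_def by blast
  define g where "g t = (\<Sum>n. a n * t ^ n)" for t :: real
  have "summable (\<lambda>n. a n * (r / 2) ^ n)"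
    using sums[of "x + r / 2"] r by (auto dest: sums_summable)
  then have "DERIV g 0 :> (\<Sum>n. diffs a n * 0 ^ n)"
    unfolding g_def by (rule termdiffs_strong) (use r in auto)
  then have "DERIV (\<lambda>y. g (y - x)) x :> (\<Sum>n. diffs a n * 0 ^ n)"
    using DERIV_shift[of g _ x "- x"] by simp
  then have "DERIV f x :> (\<Sum>n. diffs a n * 0 ^ n)"
  proof (rule has_field_derivative_transform_within_open)
    show "open (ball x r)" "x \<in> ball x r"
      using r by auto
    show "g (y - x) = f y" if "y \<in> ball x r" for y
      using sums[of y] that unfolding g_def by (simp add: dist_real_def abs_minus_commute sums_iff)
  qed
  then show ?thesis ..
qed

lemma powser_eventually_eq_or_ne:
  fixes a :: "nat \<Rightarrow> real" and f :: "real \<Rightarrow> real"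
  assumes r: "r > 0" and sums: "\<And>y. \<bar>y - x\<bar> < r \<Longrightarrow> (\<lambda>n. a n * (y - x) ^ n) sums f y"
  shows "(\<forall>\<^sub>F y in nhds x. f y = a 0) \<or> (\<forall>\<^sub>F y in at x. f y \<noteq> a 0)"
proof (cases "\<exists>m>0. a m \<noteq> 0")
  case True
  then obtain m where m: "m > 0" "a m \<noteq> 0"
    by blast
  have "(\<lambda>n. (a(0 := 0)) n * (y - x) ^ n) sums (f y - a 0)" if "norm (y - x) < r" for y
  proof -
    have "(\<lambda>n. a n * (y - x) ^ n - (if n = 0 then a 0 else 0)) sums (f y - a 0)"
      using sums_diff[OF sums[of y] sums_single[of 0 "\<lambda>_. a 0"]] that by simp
    moreover have "(\<lambda>n. a n * (y - x) ^ n - (if n = 0 then a 0 else 0)) = (\<lambda>n. (a(0 := 0)) n * (y - x) ^ n)"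
      by auto
    ultimately show ?thesis
      by simp
  qed
  moreover have "f x = a 0"
    using sums[of x] r by simp
  ultimately obtain s where s: "s > 0" "\<And>z. z \<in> cball x s - {x} \<Longrightarrow> f z - a 0 \<noteq> 0"
    using powser_0_nonzero[of r x "a(0 := 0)" "\<lambda>y. f y - a 0" m] r m by auto
  have "f y \<noteq> a 0" if "y \<noteq> x" "dist y x < s" for y
    using s(2)[of y] that by (simp add: dist_commute)
  then have "\<forall>\<^sub>F y in at x. f y \<noteq> a 0"
    unfolding eventually_at using s(1) by blast
  then show ?thesis ..
next
  case False
  have "f y = a 0" if "dist y x < r" for y
  proof -
    have "(\<lambda>n. a n * (y - x) ^ n) = (\<lambda>n. if n = 0 then a 0 else 0)"
      using False by (auto simp: fun_eq_iff) (metis neq0_conv)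
    then have "(\<lambda>n. a n * (y - x) ^ n) sums a 0"
      using sums_single[of 0 "\<lambda>_. a 0"] by simp
    then show ?thesis
      using sums[of y] that sums_unique2 by (auto simp: dist_real_def)
  qed
  then have "\<forall>\<^sub>F y in nhds x. f y = a 0"
    unfolding eventually_nhds_metric using r by blast
  then show ?thesis ..
qed

lemma real_analytic_on_eventually_eq_or_ne:
  assumes "real_analytic_on f I" "x \<in> I"
  shows "(\<forall>\<^sub>F y in nhds x. f y = c) \<or> (\<forall>\<^sub>F y in at x. f y \<noteq> c)"
proof (cases "f x = c")
  case False
  obtain D where "DERIV f x :> D"
    using real_analytic_on_imp_DERIV assms .
  then have "(f \<longlongrightarrow> f x) (at x)"
    using DERIV_isCont isCont_def by blast
  then have "\<forall>\<^sub>F y in at x. f y \<noteq> c"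
    using False tendsto_imp_eventually_ne by blast
  then show ?thesis ..
next
  case True
  obtain r a where r: "r > 0"
    and sums: "\<And>y. \<bar>y - x\<bar> < r \<Longrightarrow> y \<in> I \<and> (\<lambda>n. a n * (y - x) ^ n) sums f y"
    using assms unfolding real_analytic_on_def by blast
  moreover have "a 0 = c"
    using sums[of x] r True by simp
  ultimately show ?thesis
    using powser_eventually_eq_or_ne[of r x a f] by blast
qed

lemma open_Collect_eventually_nhds: "open {x. eventually P (nhds x)}"
  by (subst open_subopen) (force simp: eventually_nhds)

lemma real_analytic_on_nonconstant_eventually_ne:
  assumes "real_analytic_on f I" "connected I" "\<not> (\<exists>c. \<forall>x\<in>I. f x = c)" "x \<in> I"
  shows "\<forall>\<^sub>F y in at x. f y \<noteq> c"
proof -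
  \<comment> \<open>\<open>A\<close> and \<open>V\<close> are disjoint open sets covering \<open>I\<close>, so connectedness leaves only \<open>V\<close>.\<close>
  define A where "A = {x. \<forall>\<^sub>F y in nhds x. f y = c}"
  define V where "V = {x. \<forall>\<^sub>F y in nhds x. y \<notin> A}"
  have A_eq: "f y = c" if "y \<in> A" for y
    using that eventually_nhds_x_imp_x unfolding A_def by blast
  have cover: "I \<subseteq> A \<union> V"
  proof
    fix y assume y: "y \<in> I"
    show "y \<in> A \<union> V"
    proof (cases "y \<in> A")
      case False
      then have "\<forall>\<^sub>F z in at y. f z \<noteq> c"
        using real_analytic_on_eventually_eq_or_ne[OF assms(1) y, of c] unfolding A_def by blast
      then have "\<forall>\<^sub>F z in at y. z \<notin> A"
        by eventually_elim (use A_eq in blast)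
      with False show ?thesis
        by (simp add: V_def eventually_nhds_conv_at)
    qed simp
  qed
  have "open A" "open V"
    unfolding A_def V_def by (rule open_Collect_eventually_nhds)+
  moreover have "A \<inter> V \<inter> I = {}"
    unfolding V_def using eventually_nhds_x_imp_x by blast
  ultimately have "A \<inter> I = {} \<or> V \<inter> I = {}"
    using connectedD[OF assms(2)] cover by blast
  moreover have "V \<inter> I \<noteq> {}"
  proof
    assume "V \<inter> I = {}"
    then have "\<forall>y\<in>I. f y = c"
      using cover A_eq by blast
    with assms(3) show False
      by blast
  qed
  ultimately have "x \<notin> A"
    using assms(4) by blast
  then show ?thesis
    using real_analytic_on_eventually_eq_or_ne[OF assms(1,4), of c] unfolding A_def by blast
qed

lemma finite_approximations_bounded_denominator:
  fixes z :: real and X :: int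
  shows "finite {(y::int, x::int). 1 \<le> x \<and> x \<le> X \<and> \<bar>z - y / x\<bar> \<le> 1}"
proof -
  define K where "K = \<lceil>(\<bar>z\<bar> + 1) * X\<rceil>"
  have "{(y::int, x::int). 1 \<le> x \<and> x \<le> X \<and> \<bar>z - y / x\<bar> \<le> 1} \<subseteq> {-K..K} \<times> {1..X}"
  proof
    fix u
    assume "u \<in> {(y::int, x::int). 1 \<le> x \<and> x \<le> X \<and> \<bar>z - y / x\<bar> \<le> 1}"
    then obtain y x where u: "u = (y, x)" and x: "1 \<le> x" "x \<le> X" and close: "\<bar>z - y / x\<bar> \<le> 1"
      by auto
    have "\<bar>real_of_int y / x\<bar> \<le> \<bar>z\<bar> + 1"
      using close by linarith
    then have "\<bar>real_of_int y\<bar> \<le> (\<bar>z\<bar> + 1) * x"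
      using x(1) by (simp add: abs_divide divide_le_eq)
    also have "\<dots> \<le> (\<bar>z\<bar> + 1) * X"
      using x(2) by (intro mult_left_mono) auto
    also have "\<dots> \<le> K"
      unfolding K_def by (rule le_of_int_ceiling)
    finally have "\<bar>y\<bar> \<le> K"
      by linarith
    with x u show "u \<in> {-K..K} \<times> {1..X}"
      by auto
  qed
  then show ?thesis
    by (rule finite_subset) auto
qed

lemma irrational_finite_gap:
  fixes z :: real and S :: "(int \<times> int) set"
  assumes "z \<notin> \<rat>" "finite S"
  obtains d where "d > 0" "\<And>y x. (y, x) \<in> S \<Longrightarrow> d \<le> \<bar>z - y / x\<bar>"
proof -
  define err where "err u = \<bar>z - real_of_int (fst u) / real_of_int (snd u)\<bar>" for u
  have pos: "err u > 0" for u
  proof -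
    have "real_of_int (fst u) / real_of_int (snd u) \<in> \<rat>"
      by simp
    then show ?thesis
      using assms(1) unfolding err_def by auto
  qed
  have "Min (insert 1 (err ` S)) > 0"
    using assms(2) pos by (subst Min_gr_iff) auto
  moreover have "Min (insert 1 (err ` S)) \<le> \<bar>z - y / x\<bar>" if "(y, x) \<in> S" for y x
  proof -
    have "Min (insert 1 (err ` S)) \<le> err (y, x)"
      using assms(2) that by (intro Min_le) auto
    then show ?thesis
      by (simp add: err_def)
  qed
  ultimately show ?thesis
    using that by blast
qed

lemma irrational_approximation_gap:
  fixes z :: real and X :: int
  assumes "z \<notin> \<rat>"
  obtains d where "d > 0" "\<And>(y::int) (x::int). 1 \<le> x \<Longrightarrow> x \<le> X \<Longrightarrow> d \<le> \<bar>z - y / x\<bar>"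
proof -
  obtain d where d: "d > 0"
    and gap: "\<And>y x. (y, x) \<in> {(y::int, x::int). 1 \<le> x \<and> x \<le> X \<and> \<bar>z - y / x\<bar> \<le> 1} \<Longrightarrow>
                d \<le> \<bar>z - y / x\<bar>"
    using irrational_finite_gap[OF assms finite_approximations_bounded_denominator] by blast
  have "min d 1 \<le> \<bar>z - y / x\<bar>" if "1 \<le> x" "x \<le> X" for y x :: int
  proof (cases "\<bar>z - y / x\<bar> \<le> 1")
    case True
    then have "d \<le> \<bar>z - y / x\<bar>"
      using gap that by simp
    then show ?thesis
      by (simp add: min_le_iff_disj)
  qed (simp add: min_le_iff_disj)
  with d show ?thesis
    using that[of "min d 1"] by simp
qed

lemma rational_approximation_lower_bound:
  fixes a b y x :: int
  assumes "b > 0" "x > 0" "real_of_int a / b \<noteq> real_of_int y / x"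
  shows "1 / (real_of_int b * x) \<le> \<bar>real_of_int a / b - real_of_int y / x\<bar>"
proof -
  have "a * x - b * y \<noteq> 0"
  proof
    assume "a * x - b * y = 0"
    then have "real_of_int a * x = real_of_int y * b"
      by (metis eq_iff_diff_eq_0 mult.commute of_int_mult)
    then show False
      using assms by (simp add: frac_eq_eq)
  qed
  then have "1 \<le> \<bar>real_of_int (a * x - b * y)\<bar>"
    by linarith
  moreover have "real_of_int a / b - real_of_int y / x = real_of_int (a * x - b * y) / real_of_int (b * x)"
    using assms by (simp add: field_simps)
  ultimately show ?thesis
    using assms by (simp add: abs_divide divide_right_mono)
qed

lemma Rats_quadratic_approximation_gap:
  fixes \<xi> :: real
  assumes "\<xi> \<in> \<rat>"
  obtains \<epsilon> where "\<epsilon> > 0"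
    "\<And>(y::int) (x::int). x \<ge> 1 \<Longrightarrow> 0 < \<bar>\<xi> - y / x\<bar> \<Longrightarrow> \<bar>\<xi> - y / x\<bar> \<le> real_of_int x powr (- 2) \<Longrightarrow>
       \<epsilon> \<le> \<bar>\<xi> - y / x\<bar>"
proof -
  obtain a b :: int where ab: "b > 0" "\<xi> = a / b"
    using assms by (rule Rats_cases')
  have "1 / (real_of_int b * b) \<le> \<bar>\<xi> - y / x\<bar>"
    if x: "x \<ge> 1" and yx: "0 < \<bar>\<xi> - y / x\<bar>" "\<bar>\<xi> - y / x\<bar> \<le> real_of_int x powr (- 2)" for y x :: int
  proof -
    have lower: "1 / (real_of_int b * x) \<le> \<bar>\<xi> - y / x\<bar>"
      using rational_approximation_lower_bound[of b x a y] ab x yx(1) by auto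
    have "real_of_int x powr (- 2) = 1 / (real_of_int x * x)"
      using x by (simp add: powr_minus_divide power2_eq_square flip: powr_realpow)
    then have "1 / (real_of_int b * x) \<le> 1 / (real_of_int x * x)"
      using lower yx(2) by simp
    then have "real_of_int x \<le> b"
      using x ab(1) by (simp add: frac_le_eq divide_le_eq field_simps)
    then have "1 / (real_of_int b * b) \<le> 1 / (real_of_int b * x)"
      using x ab(1) by (intro divide_left_mono mult_left_mono) auto
    with lower show ?thesis
      by linarith
  qed
  moreover have "1 / (real_of_int b * b) > 0"
    using ab(1) by simp
  ultimately show ?thesis
    using that[of "1 / (real_of_int b * b)"] by blast
qed

lemma liouville_setI:
  fixes \<xi> :: real
  assumes approx: "\<And>M \<epsilon>. M > 0 \<Longrightarrow> \<epsilon> > 0 \<Longrightarrow> \<exists>(y::int) (x::int). x \<ge> 1 \<and>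
             0 < \<bar>\<xi> - y / x\<bar> \<and> \<bar>\<xi> - y / x\<bar> < \<epsilon> \<and> \<bar>\<xi> - y / x\<bar> \<le> real_of_int x powr (- M)"
  shows "\<xi> \<in> liouville_set"
proof -
  have irrational: "\<xi> \<notin> \<rat>"
  proof
    assume "\<xi> \<in> \<rat>"
    then obtain \<epsilon> where "\<epsilon> > 0"
      and gap: "\<And>(y::int) (x::int). x \<ge> 1 \<Longrightarrow> 0 < \<bar>\<xi> - y / x\<bar> \<Longrightarrow>
                  \<bar>\<xi> - y / x\<bar> \<le> real_of_int x powr (- 2) \<Longrightarrow> \<epsilon> \<le> \<bar>\<xi> - y / x\<bar>"
      using Rats_quadratic_approximation_gap by blast
    then obtain y x :: int where x: "x \<ge> 1"
      and yx: "0 < \<bar>\<xi> - y / x\<bar>" "\<bar>\<xi> - y / x\<bar> < \<epsilon>" "\<bar>\<xi> - y / x\<bar> \<le> real_of_int x powr (- 2)"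
      using approx[of 2 \<epsilon>] by auto
    have "\<epsilon> \<le> \<bar>\<xi> - y / x\<bar>"
      using gap[OF x yx(1,3)] .
    with yx(2) show False
      by linarith
  qed
  have "infinite {(y::int, x::int). x \<ge> 1 \<and> \<bar>\<xi> - y / x\<bar> \<le> real_of_int x powr (- M)}"
    if M: "M > 0" for M
  proof
    assume "finite {(y::int, x::int). x \<ge> 1 \<and> \<bar>\<xi> - y / x\<bar> \<le> real_of_int x powr (- M)}"
    then obtain d where "d > 0"
      and gap: "\<And>y x. (y, x) \<in> {(y::int, x::int). x \<ge> 1 \<and> \<bar>\<xi> - y / x\<bar> \<le> real_of_int x powr (- M)} \<Longrightarrow>
                  d \<le> \<bar>\<xi> - y / x\<bar>"
      using irrational_finite_gap[OF irrational] by blast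
    then obtain y x :: int where "x \<ge> 1" "\<bar>\<xi> - y / x\<bar> < d" "\<bar>\<xi> - y / x\<bar> \<le> real_of_int x powr (- M)"
      using approx[OF M \<open>d > 0\<close>] by auto
    with gap[of y x] show False
      by simp
  qed
  with irrational show ?thesis
    unfolding liouville_set_def by blast
qed

lemma int_fraction_reduce:
  fixes y x :: int
  assumes "x \<ge> 1"
  obtains p q where "q > 0" "coprime p q" "real_of_int y / x = real_of_int p / q" "q \<le> x"
proof -
  have "real_of_int y / x \<in> \<rat>"
    by simp
  then obtain p q where pq: "q > 0" "coprime p q" "real_of_int y / x = real_of_int p / q"
    by (rule Rats_cases')
  then have "real_of_int (p * x) = real_of_int (y * q)"
    using assms by (simp add: field_simps)
  then have "q dvd p * x"
    by (metis dvd_triv_right of_int_eq_iff)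
  then have "q dvd x"
    using pq(2) by (simp add: coprime_commute coprime_dvd_mult_right_iff)
  then have "q \<le> x"
    using assms by (simp add: zdvd_imp_le)
  with pq that show ?thesis
    by blast
qed

lemma liouville_set_reduced_approximation:
  fixes \<zeta> N \<rho> :: real and X :: int
  assumes "\<zeta> \<in> liouville_set" "N > 0" "\<rho> > 0"
  obtains p q :: int where "q > X" "q > 0" "coprime p q"
    "\<bar>\<zeta> - p / q\<bar> < \<rho>" "\<bar>\<zeta> - p / q\<bar> \<le> real_of_int q powr (- N)"
proof -
  have irrational: "\<zeta> \<notin> \<rat>"
    and many: "infinite {(y::int, x::int). x \<ge> 1 \<and> \<bar>\<zeta> - y / x\<bar> \<le> real_of_int x powr (- N)}"
    using assms unfolding liouville_set_def by auto
  obtain d where d: "d > 0" "\<And>(y::int) (x::int). 1 \<le> x \<Longrightarrow> x \<le> X \<Longrightarrow> d \<le> \<bar>\<zeta> - y / x\<bar>"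
    using irrational_approximation_gap[OF irrational] by blast
  \<comment> \<open>Staying \<open>d\<close>-close to \<open>\<zeta>\<close> forces the reduced denominator above \<open>X\<close>.\<close>
  define \<rho>' where "\<rho>' = min \<rho> d"
  define B where "B = \<lceil>\<rho>' powr (- 1 / N)\<rceil>"
  have "\<not> {(y::int, x::int). x \<ge> 1 \<and> \<bar>\<zeta> - y / x\<bar> \<le> real_of_int x powr (- N)}
           \<subseteq> {(y::int, x::int). 1 \<le> x \<and> x \<le> B \<and> \<bar>\<zeta> - y / x\<bar> \<le> 1}"
    using many finite_approximations_bounded_denominator[of B \<zeta>] finite_subset by blast
  then obtain y x :: int where x: "x \<ge> 1" and yx: "\<bar>\<zeta> - y / x\<bar> \<le> real_of_int x powr (- N)"
    and large: "\<not> (x \<le> B \<and> \<bar>\<zeta> - y / x\<bar> \<le> 1)"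
    by auto
  have "real_of_int x powr (- N) \<le> 1"
    using powr_mono2'[of "- N" 1 "real_of_int x"] x assms(2) by simp
  then have "\<rho>' powr (- 1 / N) < x"
    using yx large le_of_int_ceiling[of "\<rho>' powr (- 1 / N)"] unfolding B_def by linarith
  then have "real_of_int x powr (- N) < (\<rho>' powr (- 1 / N)) powr (- N)"
    using assms(2,3) d(1) by (intro powr_less_mono2_neg) (auto simp: \<rho>'_def)
  also have "\<dots> = \<rho>'"
    using assms(2,3) d(1) by (simp add: powr_powr \<rho>'_def)
  finally have close: "\<bar>\<zeta> - y / x\<bar> < \<rho>'"
    using yx by linarith
  obtain p q where q: "q > 0" "coprime p q" and pq: "real_of_int y / x = real_of_int p / q" and "q \<le> x"
    using int_fraction_reduce[OF x] by blast
  have "q > X"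
  proof (rule ccontr)
    assume "\<not> q > X"
    then have "d \<le> \<bar>\<zeta> - y / x\<bar>"
      using d(2)[of q p] q(1) pq by simp
    with close show False
      unfolding \<rho>'_def by linarith
  qed
  moreover have "real_of_int x powr (- N) \<le> real_of_int q powr (- N)"
    using assms(2) q(1) \<open>q \<le> x\<close> by (intro powr_mono2') auto
  ultimately show ?thesis
    using that q close yx pq unfolding \<rho>'_def by auto
qed

lemma constant_times_powr_less:
  fixes C q q' \<kappa> M :: real
  assumes "0 < C" "C < q" "0 < q'" "q' \<le> q powr \<kappa>" "0 \<le> M"
  shows "C * q powr (- (\<kappa> * M + 1)) < q' powr (- M)"
proof -
  have "C * q powr (- (\<kappa> * M + 1)) = (C / q) * q powr (- (\<kappa> * M))"
    using powr_diff[of q "- (\<kappa> * M)" 1] assms(1,2) by simp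
  also have "\<dots> < 1 * q powr (- (\<kappa> * M))"
  proof (rule mult_strict_right_mono)
    show "C / q < 1" "0 < q powr (- (\<kappa> * M))"
      using assms(1,2) by simp_all
  qed
  also have "\<dots> = (q powr \<kappa>) powr (- M)"
    by (simp add: powr_powr)
  also have "\<dots> \<le> q' powr (- M)"
    using assms(3-5) by (intro powr_mono2') auto
  finally show ?thesis .
qed

lemma liouville_set_image:
  fixes f :: "real \<Rightarrow> real" and \<zeta> C \<eta> :: real
  assumes \<zeta>: "\<zeta> \<in> liouville_set" and C: "C > 0"
    and near: "\<forall>\<^sub>F x in at \<zeta>. x \<in> I \<and> f x \<noteq> f \<zeta> \<and> \<bar>f x - f \<zeta>\<bar> \<le> C * \<bar>x - \<zeta>\<bar>"
    and rational: "\<And>x. x \<in> I \<Longrightarrow> x \<in> \<rat> \<Longrightarrow> f x \<in> \<rat>"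
    and height: "\<And>p q p' q' :: int. q \<ge> 2 \<Longrightarrow> coprime p q \<Longrightarrow> real_of_int p / q \<in> I \<Longrightarrow>
                   q' \<ge> 1 \<Longrightarrow> coprime p' q' \<Longrightarrow> f (real_of_int p / q) = real_of_int p' / q' \<Longrightarrow>
                   real_of_int q' \<le> real_of_int q powr \<eta>"
  shows "f \<zeta> \<in> liouville_set"
proof (rule liouville_setI)
  fix M \<epsilon> :: real
  assume M: "M > 0" and \<epsilon>: "\<epsilon> > 0"
  obtain \<delta> where \<delta>: "\<delta> > 0"
    and near_\<delta>: "\<And>x. x \<noteq> \<zeta> \<Longrightarrow> \<bar>x - \<zeta>\<bar> < \<delta> \<Longrightarrow> x \<in> I \<and> f x \<noteq> f \<zeta> \<and> \<bar>f x - f \<zeta>\<bar> \<le> C * \<bar>x - \<zeta>\<bar>"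
    using near unfolding eventually_at dist_real_def by blast
  define \<kappa> where "\<kappa> = max \<eta> 0"
  have N: "\<kappa> * M + 1 > 0"
    using M by (auto simp: \<kappa>_def intro!: add_nonneg_pos)
  obtain p q :: int where q: "q > \<lceil>max 1 C\<rceil>" "q > 0" and "coprime p q"
    and close: "\<bar>\<zeta> - p / q\<bar> < min \<delta> (\<epsilon> / C)"
    and approx: "\<bar>\<zeta> - p / q\<bar> \<le> real_of_int q powr (- (\<kappa> * M + 1))"
    by (rule liouville_set_reduced_approximation[OF \<zeta> N, where \<rho> = "min \<delta> (\<epsilon> / C)" and X = "\<lceil>max 1 C\<rceil>"])
      (use \<delta> \<epsilon> C in auto)
  have q2: "q \<ge> 2" and qC: "real_of_int q > C"
    using q(1) by linarith+
  have "real_of_int p / q \<noteq> \<zeta>"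
    using \<zeta> unfolding liouville_set_def by auto
  then have pq: "real_of_int p / q \<in> I" "f (p / q) \<noteq> f \<zeta>" "\<bar>f (p / q) - f \<zeta>\<bar> \<le> C * \<bar>\<zeta> - p / q\<bar>"
    using near_\<delta>[of "p / q"] close by (auto simp: abs_minus_commute)
  then have "f (p / q) \<in> \<rat>"
    using rational by simp
  then obtain p' q' :: int where "q' > 0" "coprime p' q'" and fpq: "f (p / q) = real_of_int p' / q'"
    by (rule Rats_cases')
  have "real_of_int q' \<le> real_of_int q powr \<eta>"
    using height[OF q2 \<open>coprime p q\<close> pq(1)] \<open>q' > 0\<close> \<open>coprime p' q'\<close> fpq by simp
  also have "\<dots> \<le> real_of_int q powr \<kappa>"
    using q2 by (intro powr_mono) (auto simp: \<kappa>_def)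
  finally have q': "real_of_int q' \<le> real_of_int q powr \<kappa>" .
  have image_close: "\<bar>f \<zeta> - p' / q'\<bar> \<le> C * \<bar>\<zeta> - p / q\<bar>"
    using pq(3) fpq by (simp add: abs_minus_commute)
  have "C * \<bar>\<zeta> - p / q\<bar> < \<epsilon>"
    using close C by (simp add: less_divide_eq mult.commute)
  with image_close have image_near: "\<bar>f \<zeta> - p' / q'\<bar> < \<epsilon>"
    by linarith
  have "C * \<bar>\<zeta> - p / q\<bar> \<le> C * real_of_int q powr (- (\<kappa> * M + 1))"
    using approx C by (intro mult_left_mono) auto
  also have "\<dots> < real_of_int q' powr (- M)"
    using C qC \<open>q' > 0\<close> q' M by (intro constant_times_powr_less) auto
  finally have image_approx: "\<bar>f \<zeta> - p' / q'\<bar> \<le> real_of_int q' powr (- M)"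
    using image_close by linarith
  have "0 < \<bar>f \<zeta> - p' / q'\<bar>"
    using pq(2) fpq by simp
  with image_near image_approx show "\<exists>(y::int) (x::int). x \<ge> 1 \<and> 0 < \<bar>f \<zeta> - y / x\<bar> \<and> \<bar>f \<zeta> - y / x\<bar> < \<epsilon> \<and>
                     \<bar>f \<zeta> - y / x\<bar> \<le> real_of_int x powr (- M)"
    using \<open>q' > 0\<close> by (intro exI[of _ p'] exI[of _ q']) auto
qed

theorem corollary2p2:
  fixes f :: "real \<Rightarrow> real" and I :: "real set"
  assumes "open_interval I"
    and "real_analytic_on f I"
    and "\<not> (\<exists>c. \<forall>x\<in>I. f x = c)"
    and "\<forall>x\<in>I. x \<in> \<rat> \<longrightarrow> f x \<in> \<rat>"
    and "\<exists>\<eta>::real. \<forall>(p::int) (q::int) (p'::int) (q'::int).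
           q \<ge> 2 \<and> coprime p q \<and> real_of_int p / real_of_int q \<in> I \<and>
           q' \<ge> 1 \<and> coprime p' q' \<and>
           f (real_of_int p / real_of_int q) = real_of_int p' / real_of_int q'
           \<longrightarrow> real_of_int q' \<le> real_of_int q powr \<eta>"
  shows "f ` (liouville_set \<inter> I) \<subseteq> liouville_set"
proof clarify
  fix \<zeta> assume \<zeta>: "\<zeta> \<in> liouville_set" "\<zeta> \<in> I"
  obtain \<eta> where height: "\<forall>(p::int) (q::int) (p'::int) (q'::int).
           q \<ge> 2 \<and> coprime p q \<and> real_of_int p / real_of_int q \<in> I \<and> q' \<ge> 1 \<and> coprime p' q' \<and>
           f (real_of_int p / real_of_int q) = real_of_int p' / real_of_int q'
           \<longrightarrow> real_of_int q' \<le> real_of_int q powr \<eta>"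
    using assms(5) by blast
  have "open I" "connected I"
    using assms(1) is_interval_connected unfolding open_interval_def by auto
  obtain D where "DERIV f \<zeta> :> D"
    using real_analytic_on_imp_DERIV[OF assms(2) \<zeta>(2)] .
  then have "\<forall>\<^sub>F x in at \<zeta>. x \<in> I \<and> f x \<noteq> f \<zeta> \<and> \<bar>f x - f \<zeta>\<bar> \<le> (\<bar>D\<bar> + 1) * \<bar>x - \<zeta>\<bar>"
    using eventually_nhds_in_open[OF \<open>open I\<close> \<zeta>(2)] DERIV_imp_eventually_difference_bound
      real_analytic_on_nonconstant_eventually_ne[OF assms(2) \<open>connected I\<close> assms(3) \<zeta>(2)]
    by (intro eventually_conj) (simp_all add: eventually_nhds_conv_at)
  then show "f \<zeta> \<in> liouville_set"
    using assms(4) height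
    by (intro liouville_set_image[where f = f and I = I and \<eta> = \<eta> and C = "\<bar>D\<bar> + 1", OF \<zeta>(1)]) auto
qed

end
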